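(* Let $S$ be an integral domain of characteristic zero, and let $R$ be a subring of $S$ such that $(\mathbb{Q}.R)\cap S=R$. Then every monic polynomial $f\in R[x]$ of degree at least $2$ that is indecomposable over $R$ is also indecomposable over $S$; equivalently, if a monic $f\in R[x]$ can be written as $f=G(H(x))$ with $G,H\in S[x]$ both of degree at least $2$, then $f=g(h(x))$ for some $g,h\in R[x]$ both of degree at least $2$.
   Context: For a ring $A$ and $f\in A[x]$ with $\deg f\ge 2$, $f$ is called decomposable over $A$ if $f(x)=g(h(x))$ for some $g,h\in A[x]$ of degree at least $2$, and indecomposable over $A$ otherwise. $\mathbb{Q}.R$ denotes the subring of the fraction field of $S$ generated by $\mathbb{Q}$ and $R$, i.e. the set of elements $r/n$ with $r\in R$ and $n$ a positive integer. *)

theory Defs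
  imports "HOL-Computational_Algebra.Polynomial" "HOL-Computational_Algebra.Fraction_Field"
begin

definition is_subring :: "'a::comm_ring_1 set \<Rightarrow> bool" where
  "is_subring R \<longleftrightarrow> 0 \<in> R \<and> 1 \<in> R \<and> (\<forall>x\<in>R. \<forall>y\<in>R. x + y \<in> R \<and> x * y \<in> R) \<and> (\<forall>x\<in>R. - x \<in> R)"

definition poly_over :: "'a::comm_ring_1 set \<Rightarrow> 'a poly \<Rightarrow> bool" where
  "poly_over A p \<longleftrightarrow> (\<forall>i. coeff p i \<in> A)"

definition decomposable_over :: "'a::comm_ring_1 set \<Rightarrow> 'a poly \<Rightarrow> bool" where
  "decomposable_over A f \<longleftrightarrow>
     (\<exists>g h. poly_over A g \<and> poly_over A h \<and> degree g \<ge> 2 \<and> degree h \<ge> 2 \<and> f = pcompose g h)"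

text \<open>Q.R inside the fraction field of S: the elements r/n, r in R, n a positive integer.\<close>
definition QR :: "'a::idom set \<Rightarrow> 'a fract set" where
  "QR R = {Fract r (of_nat n) | r n. r \<in> R \<and> n > 0}"

definition embS :: "'a::idom \<Rightarrow> 'a fract" where
  "embS s = Fract s 1"

end

theory Submission
  imports Defs
begin

text \<open>
  Write \<open>f = G \<circ> H\<close> over \<open>S\<close>. An affine change of variables makes \<open>G\<close> and \<open>H\<close> monic with
  \<open>H(0) = 0\<close>. If \<open>deg G = r\<close> and \<open>deg H = s\<close>, the coefficient of \<open>x\<^bsup>(r-1)s+m\<^esup>\<close> in \<open>f\<close>
  (for \<open>0 < m < s\<close>) equals \<open>r h\<^sub>m\<close> plus a polynomial expression in \<open>h\<^sub>m\<^sub>+\<^sub>1, \<dots>, h\<^sub>s\<close> with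
  integer coefficients; so by downward induction every \<open>r h\<^sub>m\<close> lies in \<open>R\<close>, and the
  hypothesis \<open>(\<bbbQ>.R) \<inter> S = R\<close> lets us divide by \<open>r\<close>. Once \<open>H\<close> is a monic polynomial over
  \<open>R\<close>, division with remainder by powers of \<open>H\<close> recovers \<open>G\<close> over \<open>R\<close> from \<open>f = G \<circ> H\<close>.
\<close>

definition closed_under_nat_division :: "'a::comm_ring_1 set \<Rightarrow> bool" where
  "closed_under_nat_division R \<longleftrightarrow> (\<forall>c n. n > 0 \<longrightarrow> c * of_nat n \<in> R \<longrightarrow> c \<in> R)"

lemma closed_under_nat_division_if_QR_saturated:
  fixes R :: "'a::{idom, ring_char_0} set"
  assumes "QR R \<inter> range embS = embS ` R"
  shows "closed_under_nat_division R"
  unfolding closed_under_nat_division_def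
proof (intro allI impI)
  fix c :: 'a and n :: nat
  assume n: "n > 0" and cn: "c * of_nat n \<in> R"
  then have "embS c = Fract (c * of_nat n) (of_nat n)"
    unfolding embS_def by (simp add: eq_fract)
  then have "embS c \<in> QR R" unfolding QR_def using cn n by blast
  then obtain x where "x \<in> R" "embS c = embS x" using assms by blast
  then show "c \<in> R" unfolding embS_def by (simp add: eq_fract)
qed

lemma subring_diff: "is_subring R \<Longrightarrow> x \<in> R \<Longrightarrow> y \<in> R \<Longrightarrow> x - y \<in> R"
  unfolding is_subring_def by (metis diff_conv_add_uminus)

lemma subring_sum:
  assumes "is_subring R" "\<And>x. x \<in> A \<Longrightarrow> f x \<in> R"
  shows "sum f A \<in> R"
  using assms(2) by (induction A rule: infinite_finite_induct) (use assms(1) in \<open>auto simp: is_subring_def\<close>)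

lemma poly_over_add: "is_subring R \<Longrightarrow> poly_over R p \<Longrightarrow> poly_over R q \<Longrightarrow> poly_over R (p + q)"
  by (auto simp: is_subring_def poly_over_def)

lemma poly_over_diff: "is_subring R \<Longrightarrow> poly_over R p \<Longrightarrow> poly_over R q \<Longrightarrow> poly_over R (p - q)"
  by (simp add: poly_over_def subring_diff)

lemma poly_over_mult:
  assumes "is_subring R" "poly_over R p" "poly_over R q"
  shows "poly_over R (p * q)"
  unfolding poly_over_def coeff_mult
  by (intro allI subring_sum[OF assms(1)]) (use assms in \<open>auto simp: is_subring_def poly_over_def\<close>)

lemma poly_over_power:
  assumes "is_subring R" "poly_over R p"
  shows "poly_over R (p ^ n)"
proof (induction n)
  case 0
  show ?case using assms(1) by (auto simp: is_subring_def poly_over_def coeff_1)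
qed (simp add: poly_over_mult assms)

lemma poly_over_smult: "is_subring R \<Longrightarrow> a \<in> R \<Longrightarrow> poly_over R p \<Longrightarrow> poly_over R (smult a p)"
  by (auto simp: is_subring_def poly_over_def)

lemma poly_over_monom: "is_subring R \<Longrightarrow> a \<in> R \<Longrightarrow> poly_over R (monom a d)"
  by (auto simp: is_subring_def poly_over_def coeff_monom)

lemma pcompose_monom: "pcompose (monom a d) q = smult a (q ^ d)"
  by (induction d) (auto simp: monom_Suc pcompose_pCons monom_0)

lemma coeff_mult_at_degree_bounds:
  fixes p q :: "'a::idom poly"
  assumes "degree p \<le> m" "degree q \<le> d"
  shows "coeff (p * q) (m + d) = coeff p m * coeff q d"
proof (cases "degree p = m \<and> degree q = d")
  case True
  then show ?thesis using coeff_mult_degree_sum[of p q] by simp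
next
  case False
  then have "coeff p m = 0 \<or> coeff q d = 0" using assms by (auto simp: coeff_eq_0)
  moreover have "coeff (p * q) (m + d) = 0"
  proof (cases "p = 0 \<or> q = 0")
    case False
    then have "degree (p * q) < m + d" using \<open>\<not> (_ \<and> _)\<close> assms by (auto simp: degree_mult_eq)
    then show ?thesis by (simp add: coeff_eq_0)
  qed auto
  ultimately show ?thesis by auto
qed

lemma coeff_power_at_degree_bound:
  fixes A :: "'a::idom poly"
  assumes "degree A \<le> s" "coeff A s = 1"
  shows "degree (A ^ i) \<le> i * s \<and> coeff (A ^ i) (i * s) = 1"
proof (induction i)
  case (Suc i)
  have "degree (A ^ Suc i) \<le> s + i * s"
    using Suc assms by (simp add: order_trans[OF degree_mult_le])
  moreover have "coeff (A * A ^ i) (s + i * s) = 1"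
    using coeff_mult_at_degree_bounds[OF assms(1), of "A ^ i" "i * s"] Suc assms by simp
  ultimately show ?case by (simp add: add.commute)
qed simp

text \<open>A perturbation \<open>E\<close> of degree \<open>m < s\<close> changes the coefficient of \<open>x\<^bsup>(r-1)s+m\<^esup>\<close> in
  \<open>A\<^sup>r\<close> only by \<open>r e\<^sub>m\<close>: write \<open>(A+E)\<^sup>r - A\<^sup>r = E \<cdot> \<Sum>\<^sub>i A\<^bsup>r-1-i\<^esup>(A+E)\<^sup>i\<close> and note that each of the
  \<open>r\<close> summands has degree at most \<open>(r-1)s\<close> with top coefficient \<open>1\<close>.\<close>
lemma coeff_power_add_low_degree:
  fixes A E :: "'a::idom poly"
  assumes dA: "degree A \<le> s" and cA: "coeff A s = 1" and dE: "degree E \<le> m" and "m < s"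
  shows "coeff ((A + E) ^ r) ((r - 1) * s + m) = coeff (A ^ r) ((r - 1) * s + m) + coeff E m * of_nat r"
proof -
  define S where "S = (\<Sum>i<r. A ^ (r - Suc i) * (A + E) ^ i)"
  have diff: "(A + E) ^ r - A ^ r = E * S"
    unfolding S_def using power_diff_sumr2[of "A + E" r A] by simp
  have dAE: "degree (A + E) \<le> s" using dA dE \<open>m < s\<close> by (simp add: degree_add_le)
  have cAE: "coeff (A + E) s = 1" using cA dE \<open>m < s\<close> by (simp add: coeff_eq_0)
  have summand: "degree (A ^ (r - Suc i) * (A + E) ^ i) \<le> (r - 1) * s \<and>
      coeff (A ^ (r - Suc i) * (A + E) ^ i) ((r - 1) * s) = 1" if "i < r" for i
  proof -
    have split: "(r - Suc i) * s + i * s = (r - 1) * s" using that by (simp add: add_mult_distrib[symmetric])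
    note p1 = coeff_power_at_degree_bound[OF dA cA, of "r - Suc i"]
    note p2 = coeff_power_at_degree_bound[OF dAE cAE, of i]
    have "degree (A ^ (r - Suc i) * (A + E) ^ i) \<le> (r - Suc i) * s + i * s"
      using p1 p2 by (meson add_le_mono degree_mult_le order_trans)
    moreover have "coeff (A ^ (r - Suc i) * (A + E) ^ i) ((r - Suc i) * s + i * s) = 1"
      using coeff_mult_at_degree_bounds[of "A ^ (r - Suc i)" _ "(A + E) ^ i"] p1 p2 by simp
    ultimately show ?thesis using split by simp
  qed
  have dS: "degree S \<le> (r - 1) * s" unfolding S_def by (rule degree_sum_le) (use summand in auto)
  have cS: "coeff S ((r - 1) * s) = of_nat r" unfolding S_def coeff_sum using summand by simp
  have "coeff ((A + E) ^ r - A ^ r) ((r - 1) * s + m) = coeff E m * of_nat r"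
    unfolding diff using coeff_mult_at_degree_bounds[OF dE dS] cS by (simp add: add.commute)
  then show ?thesis by (simp add: algebra_simps)
qed

lemma monic_decomposition_normalized:
  fixes f G H :: "'a::idom poly"
  assumes f: "f = pcompose G H" "lead_coeff f = 1" and deg: "degree G \<ge> 1" "degree H \<ge> 1"
  obtains G' H' where "f = pcompose G' H'" "lead_coeff G' = 1" "lead_coeff H' = 1" "coeff H' 0 = 0"
    "degree G' = degree G" "degree H' = degree H"
proof -
  define u where "u = lead_coeff H"
  define w where "w = lead_coeff G * u ^ (degree G - 1)"
  define c where "c = coeff H 0"
  have lc: "lead_coeff G * u ^ degree G = 1"
    using lead_coeff_comp[of H G] f deg unfolding u_def by simp
  have "u ^ degree G = u * u ^ (degree G - 1)" using deg by (simp add: power_eq_if)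
  then have uw: "u * w = 1" using lc unfolding w_def by (simp add: algebra_simps)
  define H' where "H' = smult w (H - [:c:])"
  define G' where "G' = pcompose G [:c, u:]"
  have coeff_Hc: "coeff (H - [:c:]) j = (if j = 0 then 0 else coeff H j)" for j
    unfolding c_def by (simp add: coeff_pCons split: nat.splits)
  have deg_Hc: "degree (H - [:c:]) = degree H"
  proof (rule antisym)
    show "degree (H - [:c:]) \<le> degree H" by (rule degree_le) (simp add: coeff_Hc coeff_eq_0)
    show "degree H \<le> degree (H - [:c:])" by (rule le_degree) (use coeff_Hc deg in auto)
  qed
  have "H = pcompose [:c, u:] H'"
    using uw by (simp add: pcompose_pCons H'_def mult.commute)
  then have "f = pcompose G' H'" unfolding G'_def f by (metis pcompose_assoc)
  moreover have "degree [:c, u:] = 1" using uw by auto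
  then have "lead_coeff G' = 1" "degree G' = degree G"
    using lead_coeff_comp[of "[:c, u:]" G] lc by (simp_all add: G'_def degree_pcompose)
  moreover have "lead_coeff H' = 1" "degree H' = degree H"
    using deg_Hc coeff_Hc deg uw by (auto simp: H'_def u_def mult.commute)
  moreover have "coeff H' 0 = 0" using coeff_Hc[of 0] by (simp add: H'_def del: coeff_diff)
  ultimately show ?thesis using that by metis
qed

lemma coeff_inner_component_in_subring:
  fixes f G H :: "'a::idom poly"
  assumes R: "is_subring R" "closed_under_nat_division R" and f: "poly_over R f"
    and fGH: "f = pcompose G H" and G: "lead_coeff G = 1" "degree G \<ge> 1"
    and H: "lead_coeff H = 1" and m: "0 < m" "m < degree H"
    and above: "\<And>j. m < j \<Longrightarrow> coeff H j \<in> R"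
  shows "coeff H m \<in> R"
proof -
  define r where "r = degree G"
  define s where "s = degree H"
  define E where "E = poly_cutoff (Suc m) H"
  define A where "A = H - E"
  have coeff_E: "coeff E j = (if j \<le> m then coeff H j else 0)" for j
    unfolding E_def by (simp add: coeff_poly_cutoff)
  have dE: "degree E \<le> m" by (rule degree_le) (simp add: coeff_E)
  have dA: "degree A \<le> s" by (rule degree_le) (use m in \<open>simp add: A_def s_def coeff_E coeff_eq_0\<close>)
  have cA: "coeff A s = 1" using H m by (simp add: A_def coeff_E s_def)
  have "poly_over R A" using above R(1) by (auto simp: poly_over_def A_def coeff_E is_subring_def)
  then have A_power: "coeff (A ^ r) ((r - 1) * s + m) \<in> R"
    using poly_over_power[OF R(1)] by (simp add: poly_over_def)
  have "G = monom 1 r + (G - monom 1 r)" by simp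
  then have f_split: "f = H ^ r + pcompose (G - monom 1 r) H"
    unfolding fGH by (metis pcompose_add pcompose_monom smult_1_left)
  have "degree (G - monom 1 r) \<le> r - 1"
    by (rule degree_le) (use G in \<open>auto simp: r_def coeff_monom coeff_eq_0\<close>)
  then have "degree (pcompose (G - monom 1 r) H) \<le> (r - 1) * s"
    using degree_pcompose_le[of "G - monom 1 r" H] mult_le_mono1 unfolding s_def by (blast intro: order_trans)
  then have "coeff f ((r - 1) * s + m) = coeff (H ^ r) ((r - 1) * s + m)"
    using f_split m by (simp add: coeff_eq_0)
  also have "\<dots> = coeff (A ^ r) ((r - 1) * s + m) + coeff H m * of_nat r"
    using coeff_power_add_low_degree[OF dA cA dE, of r] m by (simp add: A_def s_def coeff_E)
  finally have "coeff H m * of_nat r \<in> R"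
    using subring_diff[OF R(1) _ A_power] f unfolding poly_over_def by (metis add_diff_cancel_left')
  then show ?thesis using R(2) G(2) unfolding closed_under_nat_division_def r_def by (fastforce simp: Suc_le_eq)
qed

lemma poly_over_inner_component:
  fixes f G H :: "'a::idom poly"
  assumes R: "is_subring R" "closed_under_nat_division R" and f: "poly_over R f"
    and fGH: "f = pcompose G H" and G: "lead_coeff G = 1" "degree G \<ge> 1"
    and H: "lead_coeff H = 1" "coeff H 0 = 0"
  shows "poly_over R H"
  unfolding poly_over_def
proof
  fix j
  show "coeff H j \<in> R"
  proof (induction "degree H - j" arbitrary: j rule: less_induct)
    case less
    consider "j = 0" | "degree H \<le> j" | "0 < j" "j < degree H" by linarith
    then show ?case
    proof cases
      case 2
      then show ?thesis using H R(1) by (cases "j = degree H") (auto simp: is_subring_def coeff_eq_0)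
    next
      case 3
      then show ?thesis
        using coeff_inner_component_in_subring[OF R f fGH G H(1)] less by (simp add: diff_less_mono2)
    qed (use H R(1) in \<open>simp add: is_subring_def\<close>)
  qed
qed

lemma poly_over_outer_component:
  fixes q :: "'a::idom poly"
  assumes R: "is_subring R" and q: "poly_over R q" "lead_coeff q = 1" "degree q \<ge> 1"
  shows "poly_over R (pcompose p q) \<Longrightarrow> poly_over R p"
proof (induction "degree p" arbitrary: p rule: less_induct)
  case less
  define a where "a = lead_coeff p"
  have "a = lead_coeff (pcompose p q)" using lead_coeff_comp[of q p] q by (simp add: a_def)
  then have a: "a \<in> R" using less.prems by (simp add: poly_over_def)
  show ?case
  proof (cases "degree p = 0")
    case True
    then have "p = monom a 0" by (auto simp: a_def poly_eq_iff coeff_monom coeff_eq_0)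
    then show ?thesis using poly_over_monom[OF R a] by simp
  next
    case False
    define p' where "p' = p - monom a (degree p)"
    have "degree p' < degree p"
    proof -
      have "degree p' \<le> degree p - 1"
        by (rule degree_le) (use False in \<open>auto simp: p'_def a_def coeff_monom coeff_eq_0\<close>)
      then show ?thesis using False by linarith
    qed
    moreover have "pcompose p' q = pcompose p q - smult a (q ^ degree p)"
      by (simp add: p'_def pcompose_diff pcompose_monom)
    then have "poly_over R (pcompose p' q)"
      by (simp add: poly_over_diff poly_over_power poly_over_smult R a q less.prems)
    ultimately have "poly_over R p'" using less.hyps by blast
    then have "poly_over R (p' + monom a (degree p))" using poly_over_add poly_over_monom R a by blast
    then show ?thesis by (simp add: p'_def)
  qed
qed

theorem corollary2p2:
  fixes R :: "'a::{idom, ring_char_0} set" and f :: "'a poly"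
  assumes "is_subring R"
    and "QR R \<inter> range embS = embS ` R"
    and "poly_over R f" and "lead_coeff f = 1" and "degree f \<ge> 2"
    and "decomposable_over (UNIV :: 'a set) f"
  shows "decomposable_over R f"
proof -
  obtain G H where deg: "degree G \<ge> 2" "degree H \<ge> 2" and "f = pcompose G H"
    using assms(6) unfolding decomposable_over_def by blast
  then obtain G' H' where f: "f = pcompose G' H'" and monic: "lead_coeff G' = 1" "lead_coeff H' = 1"
      and "coeff H' 0 = 0" and deg': "degree G' = degree G" "degree H' = degree H"
    using monic_decomposition_normalized assms(4) by (metis one_le_numeral order_trans)
  have divisible: "closed_under_nat_division R"
    using assms(2) by (rule closed_under_nat_division_if_QR_saturated)
  have "poly_over R H'"
    using poly_over_inner_component[OF assms(1) divisible assms(3) f] monic \<open>coeff H' 0 = 0\<close> deg deg'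
    by simp
  moreover have "poly_over R G'"
    using poly_over_outer_component[OF assms(1) \<open>poly_over R H'\<close> monic(2)] assms(3) f deg deg' by simp
  moreover have "degree G' \<ge> 2" "degree H' \<ge> 2" using deg deg' by simp_all
  ultimately show ?thesis unfolding decomposable_over_def f by blast
qed

end
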